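(* If $r\ge 2$, then the glued binary tree $GT(r)$ satisfies ${\rm gp}_{\rm t}(GT(r))={\rm gp}_{\rm d}(GT(r))=0$.
   Context: A perfect binary tree of depth $r\ge1$ is a rooted tree in which every non-leaf vertex has exactly $2$ children and all leaves have depth $r$. The glued binary tree $GT(r)$ is obtained from two copies of the perfect binary tree of depth $r$ by pairwise identifying their leaves (via a fixed isomorphism of the copies). For $S\subseteq V(G)$, two vertices $u,v$ are $S$-positionable if every shortest $u,v$-path $P$ satisfies $V(P)\cap S\subseteq\{u,v\}$. $S$ is a general position set if every two vertices of $S$ are $S$-positionable; $S$ is a dual general position set if it is a general position set and every two vertices of $V(G)\setminus S$ are $S$-positionable; $S$ is a total general position set if every two vertices of $G$ are $S$-positionable. ${\rm gp}_{\rm d}(G)$ and ${\rm gp}_{\rm t}(G)$ are the maximum sizes of a dual, respectively total, general position set of $G$. *)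

theory Defs
  imports Main
begin

definition walk :: "('a \<Rightarrow> 'a \<Rightarrow> bool) \<Rightarrow> 'a list \<Rightarrow> bool" where
  "walk E xs \<longleftrightarrow> xs \<noteq> [] \<and> (\<forall>i. Suc i < length xs \<longrightarrow> E (xs ! i) (xs ! Suc i))"

definition gdist :: "('a \<Rightarrow> 'a \<Rightarrow> bool) \<Rightarrow> 'a \<Rightarrow> 'a \<Rightarrow> nat" where
  "gdist E u v = (LEAST n. \<exists>xs. walk E xs \<and> hd xs = u \<and> last xs = v \<and> length xs = Suc n)"

definition shortest_path :: "('a \<Rightarrow> 'a \<Rightarrow> bool) \<Rightarrow> 'a \<Rightarrow> 'a \<Rightarrow> 'a list \<Rightarrow> bool" where
  "shortest_path E u v P \<longleftrightarrow> walk E P \<and> hd P = u \<and> last P = v \<and> length P = Suc (gdist E u v)"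

definition positionable :: "('a \<Rightarrow> 'a \<Rightarrow> bool) \<Rightarrow> 'a set \<Rightarrow> 'a \<Rightarrow> 'a \<Rightarrow> bool" where
  "positionable E S u v \<longleftrightarrow> (\<forall>P. shortest_path E u v P \<longrightarrow> set P \<inter> S \<subseteq> {u, v})"

definition gp_set :: "'a set \<Rightarrow> ('a \<Rightarrow> 'a \<Rightarrow> bool) \<Rightarrow> 'a set \<Rightarrow> bool" where
  "gp_set V E S \<longleftrightarrow> S \<subseteq> V \<and> (\<forall>u\<in>S. \<forall>v\<in>S. positionable E S u v)"

definition dual_gp_set :: "'a set \<Rightarrow> ('a \<Rightarrow> 'a \<Rightarrow> bool) \<Rightarrow> 'a set \<Rightarrow> bool" where
  "dual_gp_set V E S \<longleftrightarrow> gp_set V E S \<and> (\<forall>u\<in>V - S. \<forall>v\<in>V - S. positionable E S u v)"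

definition total_gp_set :: "'a set \<Rightarrow> ('a \<Rightarrow> 'a \<Rightarrow> bool) \<Rightarrow> 'a set \<Rightarrow> bool" where
  "total_gp_set V E S \<longleftrightarrow> S \<subseteq> V \<and> (\<forall>u\<in>V. \<forall>v\<in>V. positionable E S u v)"

definition gp_d :: "'a set \<Rightarrow> ('a \<Rightarrow> 'a \<Rightarrow> bool) \<Rightarrow> nat" where
  "gp_d V E = Max {card S | S. dual_gp_set V E S}"

definition gp_t :: "'a set \<Rightarrow> ('a \<Rightarrow> 'a \<Rightarrow> bool) \<Rightarrow> nat" where
  "gp_t V E = Max {card S | S. total_gp_set V E S}"

text \<open>A vertex of the perfect binary tree of depth r is a binary word of length \<le> r
  (the root is []; the children of w are w@[b]). A vertex of GT(r) is a pair (c, w)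
  where c is the copy; leaves (length w = r) are identified across copies and
  represented with c = False.\<close>

definition GT_V :: "nat \<Rightarrow> (bool \<times> bool list) set" where
  "GT_V r = {(c, w). length w \<le> r \<and> (length w = r \<longrightarrow> c = False)}"

definition GT_child :: "nat \<Rightarrow> bool \<times> bool list \<Rightarrow> bool \<times> bool list \<Rightarrow> bool" where
  "GT_child r x y \<longleftrightarrow> (\<exists>b. snd y = snd x @ [b]) \<and> (fst y = fst x \<or> length (snd y) = r)"

definition GT_E :: "nat \<Rightarrow> bool \<times> bool list \<Rightarrow> bool \<times> bool list \<Rightarrow> bool" where
  "GT_E r x y \<longleftrightarrow> x \<in> GT_V r \<and> y \<in> GT_V r \<and> (GT_child r x y \<or> GT_child r y x)"

end

theory Submission
  imports Defs
begin

text \<open>If a, b are distinct, non-adjacent and have a common neighbour y, then a y b is a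
  shortest a,b-path, so two such vertices are S-positionable only if y \<notin> S. In GT(r) adjacent
  vertices differ in depth by one, so the neighbours of a vertex are pairwise non-adjacent.
  Hence if y lies in a dual general position set S, any two distinct neighbours of y lie on
  opposite sides of S, which is impossible if y has three neighbours. So S contains no internal vertex,
  and then neither the root nor a leaf: both neighbours of those are internal when r \<ge> 2.
  Thus only the empty set is a dual (a fortiori a total) general position set.\<close>

lemma walk_Cons_Cons: "walk E (x # y # xs) \<longleftrightarrow> E x y \<and> walk E (y # xs)"
  unfolding walk_def by (auto simp: nth_Cons split: nat.splits)

lemma walk_singleton: "walk E [x]"
  unfolding walk_def by simp

lemma gdist_eq_2:
  assumes "E a y" "E y b" "a \<noteq> b" "\<not> E a b"
  shows "gdist E a b = 2"
  unfolding gdist_def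
proof (rule Least_equality)
  show "\<exists>xs. walk E xs \<and> hd xs = a \<and> last xs = b \<and> length xs = Suc 2"
    using assms by (intro exI[of _ "[a, y, b]"]) (simp add: walk_Cons_Cons walk_singleton)
next
  fix n assume "\<exists>xs. walk E xs \<and> hd xs = a \<and> last xs = b \<and> length xs = Suc n"
  then obtain xs where xs: "walk E xs" "hd xs = a" "last xs = b" "length xs = Suc n"
    by blast
  show "2 \<le> n"
  proof (rule ccontr)
    assume "\<not> 2 \<le> n"
    then consider "length xs = 1" | "length xs = 2" using xs(4) by linarith
    then show False
    proof cases
      case 1
      then obtain z where "xs = [z]" by (cases xs) auto
      with xs assms(3) show False by simp
    next
      case 2
      then obtain z1 z2 where "xs = [z1, z2]" by (cases xs; cases "tl xs") auto
      with xs assms(4) show False by (simp add: walk_Cons_Cons)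
    qed
  qed
qed

lemma positionable_common_neighbour_notin:
  assumes "positionable E S a b" "E a y" "E y b" "a \<noteq> b" "\<not> E a b"
  shows "y \<notin> S"
proof -
  have "walk E [a, y, b]"
    using assms(2,3) by (simp add: walk_Cons_Cons walk_singleton)
  then have "shortest_path E a b [a, y, b]"
    using gdist_eq_2[OF assms(2-5)] unfolding shortest_path_def by simp
  then have "set [a, y, b] \<inter> S \<subseteq> {a, b}"
    using assms(1) unfolding positionable_def by blast
  moreover have "y \<noteq> a" "y \<noteq> b" using assms(2,3,5) by auto
  ultimately show ?thesis by auto
qed

lemma dual_gp_set_common_neighbour_opposite_sides:
  assumes "dual_gp_set V E S" "y \<in> S" "a \<in> V" "b \<in> V"
    and "E a y" "E y b" "a \<noteq> b" "\<not> E a b"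
  shows "a \<in> S \<longleftrightarrow> b \<notin> S"
proof -
  have "\<not> positionable E S a b"
    using positionable_common_neighbour_notin[OF _ assms(5-8)] assms(2) by blast
  then show ?thesis
    using assms(1,3,4) unfolding dual_gp_set_def gp_set_def by blast
qed

lemma total_gp_set_imp_dual_gp_set: "total_gp_set V E S \<Longrightarrow> dual_gp_set V E S"
  unfolding total_gp_set_def dual_gp_set_def gp_set_def by blast

lemma gp_t_eq_0:
  assumes "\<And>S. total_gp_set V E S \<Longrightarrow> S = {}"
  shows "gp_t V E = 0"
proof -
  have "total_gp_set V E {}"
    unfolding total_gp_set_def positionable_def by simp
  with assms have "{card S | S. total_gp_set V E S} = {0}" by force
  then show ?thesis unfolding gp_t_def by simp
qed

lemma gp_d_eq_0:
  assumes "\<And>S. dual_gp_set V E S \<Longrightarrow> S = {}"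
  shows "gp_d V E = 0"
proof -
  have "dual_gp_set V E {}"
    unfolding dual_gp_set_def gp_set_def positionable_def by simp
  with assms have "{card S | S. dual_gp_set V E S} = {0}" by force
  then show ?thesis unfolding gp_d_def by simp
qed

lemma GT_E_sym: "GT_E r x y \<Longrightarrow> GT_E r y x"
  unfolding GT_E_def by auto

lemma GT_E_in_V: "GT_E r x y \<Longrightarrow> x \<in> GT_V r"
  unfolding GT_E_def by simp

lemma GT_E_length:
  "GT_E r x y \<Longrightarrow> length (snd y) = Suc (length (snd x)) \<or> length (snd x) = Suc (length (snd y))"
  unfolding GT_E_def GT_child_def by auto

lemma GT_E_common_neighbour_not_adjacent:
  assumes "GT_E r y a" "GT_E r y b"
  shows "\<not> GT_E r a b"
  using GT_E_length[of r a b] GT_E_length[OF assms(1)] GT_E_length[OF assms(2)] by linarith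

lemma GT_dual_gp_set_neighbours_opposite_sides:
  assumes "dual_gp_set (GT_V r) (GT_E r) S" "y \<in> S"
    and "GT_E r y a" "GT_E r y b" "a \<noteq> b"
  shows "a \<in> S \<longleftrightarrow> b \<notin> S"
proof (rule dual_gp_set_common_neighbour_opposite_sides[OF assms(1,2)])
  show "a \<in> GT_V r" "b \<in> GT_V r"
    using GT_E_in_V GT_E_sym assms(3,4) by blast+
  show "GT_E r a y" using GT_E_sym[OF assms(3)] .
  show "\<not> GT_E r a b" using GT_E_common_neighbour_not_adjacent[OF assms(3,4)] .
qed (use assms in auto)

lemma GT_internal_vertex_notin_dual_gp_set:
  assumes "dual_gp_set (GT_V r) (GT_E r) S" "0 < length w" "length w < r"
  shows "(c, w) \<notin> S"
proof
  assume inS: "(c, w) \<in> S"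
  \<comment> \<open>leaves are represented in copy False\<close>
  define c' where "c' = (if Suc (length w) = r then False else c)"
  have parent: "GT_E r (c, w) (c, butlast w)"
    using assms(2,3) unfolding GT_E_def GT_V_def GT_child_def
    by (auto intro!: exI[of _ "last w"] simp: append_butlast_last_id)
  have child: "GT_E r (c, w) (c', w @ [b])" for b
    using assms(2,3) unfolding GT_E_def GT_V_def GT_child_def c'_def by auto
  have "length (butlast w) \<noteq> length (w @ [b])" for b
    by simp
  then have "(c, butlast w) \<noteq> (c', w @ [b])" for b
    by (metis snd_conv)
  then have "(c, butlast w) \<in> S \<longleftrightarrow> (c', w @ [b]) \<notin> S" for b
    using GT_dual_gp_set_neighbours_opposite_sides[OF assms(1) inS parent child] by simp
  moreover have "(c', w @ [True]) \<in> S \<longleftrightarrow> (c', w @ [False]) \<notin> S"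
    using GT_dual_gp_set_neighbours_opposite_sides[OF assms(1) inS child[of True] child[of False]]
    by simp
  ultimately show False by blast
qed

lemma GT_root_notin_dual_gp_set:
  assumes "dual_gp_set (GT_V r) (GT_E r) S" "r \<ge> 2"
  shows "(c, []) \<notin> S"
proof
  assume inS: "(c, []) \<in> S"
  have "GT_E r (c, []) (c, [b])" for b
    using assms(2) unfolding GT_E_def GT_V_def GT_child_def by auto
  moreover have "(c, [b]) \<notin> S" for b
    using GT_internal_vertex_notin_dual_gp_set[OF assms(1)] assms(2) by simp
  ultimately show False
    using GT_dual_gp_set_neighbours_opposite_sides[OF assms(1) inS] by blast
qed

lemma GT_leaf_notin_dual_gp_set:
  assumes "dual_gp_set (GT_V r) (GT_E r) S" "r \<ge> 2" "length w = r"
  shows "(False, w) \<notin> S"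
proof
  assume inS: "(False, w) \<in> S"
  have "w \<noteq> []" using assms(2,3) by auto
  then have w: "w = butlast w @ [last w]" by simp
  have "GT_E r (False, w) (b, butlast w)" for b
    using assms(2,3) w unfolding GT_E_def GT_V_def GT_child_def by auto
  moreover have "(b, butlast w) \<notin> S" for b
    using GT_internal_vertex_notin_dual_gp_set[OF assms(1), of "butlast w" b] assms(2,3) by simp
  ultimately show False
    using GT_dual_gp_set_neighbours_opposite_sides[OF assms(1) inS] by blast
qed

lemma GT_dual_gp_set_empty:
  assumes "dual_gp_set (GT_V r) (GT_E r) S" "r \<ge> 2"
  shows "S = {}"
proof -
  have "(c, w) \<notin> S" if V: "(c, w) \<in> GT_V r" for c w
  proof -
    consider "w = []" | "0 < length w \<and> length w < r" | "length w = r \<and> c = False"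
      using V unfolding GT_V_def by (cases "w = []"; cases "length w = r") auto
    then show ?thesis
    proof cases
      case 1
      then show ?thesis using GT_root_notin_dual_gp_set assms by simp
    next
      case 2
      then show ?thesis using GT_internal_vertex_notin_dual_gp_set assms(1) by simp
    next
      case 3
      then show ?thesis using GT_leaf_notin_dual_gp_set assms by simp
    qed
  qed
  moreover have "S \<subseteq> GT_V r"
    using assms(1) unfolding dual_gp_set_def gp_set_def by blast
  ultimately show ?thesis by auto
qed

theorem mainTheorem10:
  fixes r :: nat
  assumes "r \<ge> 2"
  shows "gp_t (GT_V r) (GT_E r) = 0 \<and> gp_d (GT_V r) (GT_E r) = 0"
proof -
  have dual_empty: "dual_gp_set (GT_V r) (GT_E r) S \<Longrightarrow> S = {}" for S
    using GT_dual_gp_set_empty assms by blast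
  have "gp_t (GT_V r) (GT_E r) = 0"
    using gp_t_eq_0 dual_empty total_gp_set_imp_dual_gp_set by blast
  moreover have "gp_d (GT_V r) (GT_E r) = 0"
    using gp_d_eq_0 dual_empty by blast
  ultimately show ?thesis ..
qed

end
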